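(* For every fixed integer $k\ge1$, as formal power series in $y$, \[ \sum_{n\ge0}d^-_{n,k}y^n=\frac{y^{2k}(2-y)}{(1-y)^{k+1}}+y\,\delta_{k1}, \] where $\delta$ is the Kronecker delta.
   Context: For $n\ge1$ let $\Xi_n$ be the poset on $\{x_1,\dots,x_n\}$ whose cover relations are exactly: $x_2\prec x_1$, $x_3\prec x_2$, and for $3\le i\le n-1$, $x_i\prec x_{i+1}$ if $i$ is odd and $x_{i+1}\prec x_i$ if $i$ is even (so $x_1>x_2>x_3<x_4>x_5<\cdots$). A filter of a poset is an up-closed subset. $\Omega_n$ is the lattice of filters of $\Xi_n$ ordered by reverse inclusion; $\Omega_0$ is the one-element lattice. $d^-_{n,k}$ is the number of elements of $\Omega_n$ that are covered by exactly $k$ elements of $\Omega_n$ (equivalently, the number of $k$-element antichains of $\Xi_n$), and $d^-_{n,k}=0$ if there are none. *)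

theory Defs
  imports "HOL-Computational_Algebra.Formal_Power_Series"
begin

text \<open>The poset Xi_n on the ground set {1..n} (x_i represented by i).
  A pair (a,b) in xi_cover n means x_a \<prec> x_b is a cover relation.\<close>
definition xi_cover :: "nat \<Rightarrow> (nat \<times> nat) set" where
  "xi_cover n = {(a,b). a \<in> {1..n} \<and> b \<in> {1..n} \<and>
     ((a = 2 \<and> b = 1) \<or> (a = 3 \<and> b = 2) \<or>
      (\<exists>i. 3 \<le> i \<and> i \<le> n - 1 \<and>
         ((odd i \<and> a = i \<and> b = i + 1) \<or> (even i \<and> a = i + 1 \<and> b = i))))}"

definition xi_le :: "nat \<Rightarrow> nat \<Rightarrow> nat \<Rightarrow> bool" where
  "xi_le n x y \<longleftrightarrow> x \<in> {1..n} \<and> y \<in> {1..n} \<and> (x, y) \<in> (xi_cover n)\<^sup>*"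

definition xi_filter :: "nat \<Rightarrow> nat set \<Rightarrow> bool" where
  "xi_filter n F \<longleftrightarrow> F \<subseteq> {1..n} \<and> (\<forall>x\<in>F. \<forall>y. xi_le n x y \<longrightarrow> y \<in> F)"

text \<open>Omega_n: the set of filters, ordered by reverse inclusion (F \<le> G iff G \<subseteq> F).\<close>
definition Omega :: "nat \<Rightarrow> nat set set" where
  "Omega n = {F. xi_filter n F}"

definition omega_covers :: "nat \<Rightarrow> nat set \<Rightarrow> nat set \<Rightarrow> bool" where
  "omega_covers n G F \<longleftrightarrow> F \<in> Omega n \<and> G \<in> Omega n \<and> G \<subset> F \<and>
     \<not> (\<exists>H \<in> Omega n. G \<subset> H \<and> H \<subset> F)"

definition dminus :: "nat \<Rightarrow> nat \<Rightarrow> nat" where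
  "dminus n k = card {F \<in> Omega n. card {G. omega_covers n G F} = k}"

end

(* A filter F of a finite poset is covered, in reverse inclusion, exactly by the filters
   F - {m} with m minimal in F, and F is determined by its antichain of minimal elements.
   Hence d^-_{n,k} is the number of k-element antichains of Xi_n.  Two distinct elements of
   Xi_n are comparable iff they are consecutive or form the pair {1,3}, so these antichains
   are the k-element independent sets of the path 1 - 2 - ... - n with the extra edge {1,3}.
   Deleting or keeping the top vertex n gives A(n,k) = A(n-1,k) + A(n-2,k-1) for n >= 4,
   i.e. (1 - y) F_k = y^2 F_(k-1) for the generating functions, up to a single correction
   y^3 at k = 2; together with F_1 = y/(1-y)^2 this yields the closed form by induction. *)

theory Submission
  imports Defs
begin

locale finite_poset =
  fixes A :: "'a set" and le :: "'a \<Rightarrow> 'a \<Rightarrow> bool"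
  assumes finite_carrier: "finite A"
    and le_carrier: "le x y \<Longrightarrow> x \<in> A \<and> y \<in> A"
    and le_refl: "x \<in> A \<Longrightarrow> le x x"
    and le_antisym: "le x y \<Longrightarrow> le y x \<Longrightarrow> x = y"
    and le_trans: "le x y \<Longrightarrow> le y z \<Longrightarrow> le x z"
begin

definition up_closed :: "'a set \<Rightarrow> bool" where
  "up_closed F \<longleftrightarrow> F \<subseteq> A \<and> (\<forall>x\<in>F. \<forall>y. le x y \<longrightarrow> y \<in> F)"

definition covers :: "'a set \<Rightarrow> 'a set \<Rightarrow> bool" where
  "covers G F \<longleftrightarrow> up_closed F \<and> up_closed G \<and> G \<subset> F \<and>
     \<not> (\<exists>H. up_closed H \<and> G \<subset> H \<and> H \<subset> F)"

definition minimal_elems :: "'a set \<Rightarrow> 'a set" where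
  "minimal_elems F = {m \<in> F. \<forall>y\<in>F. le y m \<longrightarrow> y = m}"

definition up_set :: "'a set \<Rightarrow> 'a set" where
  "up_set S = {y. \<exists>x\<in>S. le x y}"

definition antichain :: "'a set \<Rightarrow> bool" where
  "antichain S \<longleftrightarrow> S \<subseteq> A \<and> (\<forall>x\<in>S. \<forall>y\<in>S. le x y \<longrightarrow> x = y)"

lemma minimal_elems_subset: "minimal_elems F \<subseteq> F"
  by (auto simp: minimal_elems_def)

lemma exists_minimal_below:
  assumes "F \<subseteq> A" "x \<in> F"
  shows "\<exists>m \<in> minimal_elems F. le m x"
proof -
  \<comment> \<open>minimise the size of the down-set, which strictly decreases along the strict order\<close>
  define down where "down y = card {z \<in> A. le z y}" for y
  obtain m where m: "m \<in> F" "le m x"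
    and least: "\<And>y. y \<in> F \<Longrightarrow> le y x \<Longrightarrow> down m \<le> down y"
    using ex_has_least_nat[of "\<lambda>y. y \<in> F \<and> le y x" x down] assms le_refl by blast
  have "y = m" if "y \<in> F" "le y m" for y
  proof (rule ccontr)
    assume "y \<noteq> m"
    then have "{z \<in> A. le z y} \<subset> {z \<in> A. le z m}"
      using that(2) le_antisym le_trans le_carrier le_refl by blast
    then have "down y < down m"
      unfolding down_def by (rule psubset_card_mono[rotated]) (simp add: finite_carrier)
    moreover have "down m \<le> down y" using least that le_trans m(2) by blast
    ultimately show False by simp
  qed
  then show ?thesis using m by (auto simp: minimal_elems_def)
qed

lemma up_closed_remove_minimal:
  "up_closed F \<Longrightarrow> m \<in> minimal_elems F \<Longrightarrow> up_closed (F - {m})"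
  unfolding up_closed_def minimal_elems_def by blast

lemma covers_iff_remove_minimal:
  assumes F: "up_closed F"
  shows "covers G F \<longleftrightarrow> (\<exists>m \<in> minimal_elems F. G = F - {m})"
proof
  assume cov: "covers G F"
  then obtain x where x: "x \<in> F" "x \<notin> G" by (auto simp: covers_def)
  obtain m where m: "m \<in> minimal_elems F" "le m x"
    using exists_minimal_below[OF _ x(1)] F by (auto simp: up_closed_def)
  have "m \<notin> G" using cov m x by (auto simp: covers_def up_closed_def)
  then have "G \<subseteq> F - {m}" using cov by (auto simp: covers_def)
  moreover have "F - {m} \<subset> F" using m minimal_elems_subset by blast
  ultimately have "G = F - {m}"
    using cov up_closed_remove_minimal[OF F m(1)] by (auto simp: covers_def)
  then show "\<exists>m \<in> minimal_elems F. G = F - {m}" using m by blast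
next
  assume "\<exists>m \<in> minimal_elems F. G = F - {m}"
  then obtain m where m: "m \<in> minimal_elems F" "G = F - {m}" by blast
  then show "covers G F"
    using F up_closed_remove_minimal[OF F m(1)] minimal_elems_subset
    unfolding covers_def by blast
qed

lemma card_covers: "up_closed F \<Longrightarrow> card {G. covers G F} = card (minimal_elems F)"
proof -
  assume "up_closed F"
  then have "{G. covers G F} = (\<lambda>m. F - {m}) ` minimal_elems F"
    using covers_iff_remove_minimal by blast
  moreover have "inj_on (\<lambda>m. F - {m}) (minimal_elems F)"
    using minimal_elems_subset unfolding inj_on_def by blast
  ultimately show ?thesis by (simp add: card_image)
qed

lemma up_set_minimal_elems:
  assumes "up_closed F"
  shows "up_set (minimal_elems F) = F"
proof (intro equalityI subsetI)
  fix y assume "y \<in> up_set (minimal_elems F)"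
  then obtain m where "m \<in> F" "le m y" using minimal_elems_subset by (auto simp: up_set_def)
  then show "y \<in> F" using assms by (auto simp: up_closed_def)
next
  fix x assume "x \<in> F"
  then show "x \<in> up_set (minimal_elems F)"
    using exists_minimal_below assms by (auto simp: up_set_def up_closed_def)
qed

lemma minimal_elems_up_set: "antichain S \<Longrightarrow> minimal_elems (up_set S) = S"
proof (intro equalityI subsetI)
  fix m assume S: "antichain S" and "m \<in> minimal_elems (up_set S)"
  then obtain x where "x \<in> S" "le x m" "\<forall>y \<in> up_set S. le y m \<longrightarrow> y = m"
    by (auto simp: minimal_elems_def up_set_def)
  moreover have "x \<in> up_set S"
    using \<open>x \<in> S\<close> S le_refl by (auto simp: up_set_def antichain_def)
  ultimately show "m \<in> S" by auto
next
  fix s assume S: "antichain S" and s: "s \<in> S"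
  have "y = s" if y: "y \<in> up_set S" "le y s" for y
  proof -
    obtain x where "x \<in> S" "le x y" using y(1) by (auto simp: up_set_def)
    then show "y = s" using S s y(2) le_trans le_antisym by (metis antichain_def)
  qed
  moreover have "s \<in> up_set S" using S s le_refl by (auto simp: up_set_def antichain_def)
  ultimately show "s \<in> minimal_elems (up_set S)" by (auto simp: minimal_elems_def)
qed

lemma bij_betw_minimal_elems:
  "bij_betw minimal_elems {F. up_closed F} {S. antichain S}"
proof (rule bij_betw_byWitness[where f' = up_set])
  show "minimal_elems ` {F. up_closed F} \<subseteq> {S. antichain S}"
    unfolding minimal_elems_def up_closed_def antichain_def by blast
  show "up_set ` {S. antichain S} \<subseteq> {F. up_closed F}"
    unfolding up_set_def up_closed_def antichain_def using le_trans le_carrier by blast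
qed (simp_all add: up_set_minimal_elems minimal_elems_up_set)

lemma card_up_closed_covered_by:
  "card {F. up_closed F \<and> card {G. covers G F} = k} = card {S. antichain S \<and> card S = k}"
proof -
  have "bij_betw minimal_elems {F \<in> {F. up_closed F}. card {G. covers G F} = k}
          {S \<in> {S. antichain S}. card S = k}"
    by (rule bij_betw_Collect[OF bij_betw_minimal_elems]) (simp add: card_covers)
  then show ?thesis by (simp add: bij_betw_same_card)
qed

end

lemma xi_cover_iff:
  "(a, b) \<in> xi_cover n \<longleftrightarrow> a \<in> {1..n} \<and> b \<in> {1..n} \<and>
     ((a = 2 \<and> b = 1) \<or> (a = 3 \<and> b = 2) \<or> (odd a \<and> 3 \<le> a \<and> b = a + 1) \<or> (odd a \<and> 5 \<le> a \<and> b + 1 = a))"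
proof -
  have "(\<exists>i. 3 \<le> i \<and> i \<le> n - 1 \<and> ((odd i \<and> a = i \<and> b = i + 1) \<or> (even i \<and> a = i + 1 \<and> b = i)))
     \<longleftrightarrow> (odd a \<and> 3 \<le> a \<and> b = a + 1) \<or> (odd a \<and> 5 \<le> a \<and> b + 1 = a)"
    if "a \<in> {1..n}" "b \<in> {1..n}"
    using that by (auto, presburger+)
  then show ?thesis unfolding xi_cover_def by auto
qed

lemma xi_le_iff:
  "xi_le n x y \<longleftrightarrow> x \<in> {1..n} \<and> y \<in> {1..n} \<and> (x = y \<or> (x, y) \<in> xi_cover n \<or> (x = 3 \<and> y = 1))"
proof -
  have "x = y \<or> (x, y) \<in> xi_cover n \<or> (x = 3 \<and> y = 1)" if "(x, y) \<in> (xi_cover n)\<^sup>*"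
    using that by (induction rule: rtrancl_induct) (auto simp: xi_cover_iff)
  moreover have "(3, 1) \<in> (xi_cover n)\<^sup>*" if "3 \<le> n"
  proof -
    have "(3, 2) \<in> xi_cover n" "(2, 1) \<in> xi_cover n" using that by (auto simp: xi_cover_iff)
    then show ?thesis by (meson converse_rtrancl_into_rtrancl r_into_rtrancl)
  qed
  ultimately show ?thesis unfolding xi_le_def by auto
qed

definition xi_rank :: "nat \<Rightarrow> nat" where
  "xi_rank x = (if x = 1 then 2 else if x = 2 \<or> even x then 1 else 0)"

lemma xi_rank_strict_mono: "xi_le n x y \<Longrightarrow> x \<noteq> y \<Longrightarrow> xi_rank x < xi_rank y"
  by (auto simp: xi_le_iff xi_cover_iff xi_rank_def)

interpretation xi: finite_poset "{1..n}" "xi_le n" for n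
proof
  show "x = y" if "xi_le n x y" "xi_le n y x" for x y
    using xi_rank_strict_mono[OF that(1)] xi_rank_strict_mono[OF that(2)] by fastforce
  show "xi_le n x z" if "xi_le n x y" "xi_le n y z" for x y z
    using that unfolding xi_le_def by (meson rtrancl_trans)
qed (auto simp: xi_le_def)

lemma Omega_eq_up_closed: "Omega n = {F. xi.up_closed n F}"
  unfolding Omega_def xi_filter_def xi.up_closed_def ..

lemma omega_covers_eq_covers: "omega_covers n = xi.covers n"
  unfolding omega_covers_def xi.covers_def Omega_eq_up_closed by (simp add: fun_eq_iff)

lemma dminus_eq_card_antichains: "dminus n k = card {S. xi.antichain n S \<and> card S = k}"
  unfolding dminus_def Omega_eq_up_closed omega_covers_eq_covers
    xi.card_up_closed_covered_by[symmetric] by simp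

lemma xi_le_distinct_cases: "xi_le n x y \<Longrightarrow> x \<noteq> y \<Longrightarrow> y = Suc x \<or> x = Suc y \<or> (x = 3 \<and> y = 1)"
  by (auto simp: xi_le_iff xi_cover_iff)

lemma xi_le_Suc_comparable:
  assumes "1 \<le> a" "Suc a \<le> n"
  shows "xi_le n a (Suc a) \<or> xi_le n (Suc a) a"
proof (cases "odd a \<and> 3 \<le> a")
  case True
  then have "(a, Suc a) \<in> xi_cover n" using assms by (simp add: xi_cover_iff)
  then show ?thesis using assms by (simp add: xi_le_iff)
next
  case False
  then have "a = 1 \<or> a = 2 \<or> (odd (Suc a) \<and> 5 \<le> Suc a)" using assms by presburger
  then have "(Suc a, a) \<in> xi_cover n" using assms by (auto simp: xi_cover_iff)
  then show ?thesis using assms by (simp add: xi_le_iff)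
qed

text \<open>The comparability graph of Xi_n is the path 1 - 2 - ... - n plus the edge {1,3};
  its independent sets are exactly the antichains.\<close>
definition xi_indep :: "nat \<Rightarrow> nat set \<Rightarrow> bool" where
  "xi_indep n S \<longleftrightarrow> S \<subseteq> {1..n} \<and> (\<forall>i\<in>S. Suc i \<notin> S) \<and> \<not> (1 \<in> S \<and> 3 \<in> S)"

lemma xi_antichain_iff_indep: "xi.antichain n S \<longleftrightarrow> xi_indep n S"
proof
  assume "xi.antichain n S"
  then have sub: "S \<subseteq> {1..n}" and anti: "\<And>x y. x \<in> S \<Longrightarrow> y \<in> S \<Longrightarrow> xi_le n x y \<Longrightarrow> x = y"
    unfolding xi.antichain_def by auto
  have "Suc i \<notin> S" if i: "i \<in> S" for i
  proof
    assume Si: "Suc i \<in> S"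
    then have "1 \<le> i" "Suc i \<le> n" using sub i by auto
    then show False using xi_le_Suc_comparable[of i n] anti i Si by fastforce
  qed
  moreover have "\<not> (1 \<in> S \<and> 3 \<in> S)"
  proof
    assume S13: "1 \<in> S \<and> 3 \<in> S"
    then have "xi_le n 3 1" using sub by (auto simp: xi_le_iff)
    then show False using anti S13 by fastforce
  qed
  ultimately show "xi_indep n S" using sub by (simp add: xi_indep_def)
next
  assume "xi_indep n S"
  then show "xi.antichain n S"
    using xi_le_distinct_cases unfolding xi.antichain_def xi_indep_def by blast
qed

definition xi_indep_count :: "nat \<Rightarrow> nat \<Rightarrow> nat" where
  "xi_indep_count n k = card {S. xi_indep n S \<and> card S = k}"

lemma dminus_eq_xi_indep_count: "dminus n k = xi_indep_count n k"
  unfolding dminus_eq_card_antichains xi_antichain_iff_indep xi_indep_count_def ..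

lemma xi_indep_finite: "xi_indep n S \<Longrightarrow> finite S"
  by (auto simp: xi_indep_def intro: finite_subset)

lemma finite_xi_indep: "finite {S. xi_indep n S \<and> P S}"
  by (rule finite_subset[of _ "Pow {1..n}"]) (auto simp: xi_indep_def)

lemma xi_indep_count_one: "xi_indep_count n (Suc 0) = n"
proof -
  have "{S. xi_indep n S \<and> card S = Suc 0} = (\<lambda>i. {i}) ` {1..n}"
    by (auto simp: xi_indep_def card_1_singleton_iff)
  then show ?thesis unfolding xi_indep_count_def by (simp add: card_image)
qed

lemma xi_indep_count_eq_0:
  assumes "n \<le> 3" "2 \<le> k"
  shows "xi_indep_count n k = 0"
proof -
  have "card S \<le> 1" if S: "xi_indep n S" for S
  proof -
    have "S \<subseteq> {1, 2, 3}" "2 \<in> S \<Longrightarrow> 1 \<notin> S \<and> 3 \<notin> S" "\<not> (1 \<in> S \<and> 3 \<in> S)"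
      using S assms(1) by (auto simp: xi_indep_def numeral_3_eq_3 numeral_2_eq_2)
    then have "S \<subseteq> {1} \<or> S \<subseteq> {2} \<or> S \<subseteq> {3}" by blast
    then show ?thesis by (metis card.empty card.insert card_mono empty_iff finite.intros One_nat_def)
  qed
  then have none: "{S. xi_indep n S \<and> card S = k} = {}" using assms(2) by fastforce
  show ?thesis unfolding xi_indep_count_def none by simp
qed

lemma xi_indep_Suc_iff: "xi_indep (Suc n) S \<and> Suc n \<notin> S \<longleftrightarrow> xi_indep n S"
  by (auto simp: xi_indep_def subset_iff le_Suc_eq)

lemma xi_indep_insert_top:
  assumes "2 \<le> n" "Suc (Suc n) \<notin> T"
  shows "xi_indep (Suc (Suc n)) (insert (Suc (Suc n)) T) \<longleftrightarrow> xi_indep n T"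
proof
  assume top: "xi_indep (Suc (Suc n)) (insert (Suc (Suc n)) T)"
  then have "Suc n \<notin> T" by (auto simp: xi_indep_def)
  with top assms show "xi_indep n T" by (auto simp: xi_indep_def subset_iff le_Suc_eq)
qed (use assms in \<open>auto simp: xi_indep_def subset_iff\<close>)

lemma xi_indep_count_Suc_Suc:
  assumes "2 \<le> n"
  shows "xi_indep_count (Suc (Suc n)) (Suc k) = xi_indep_count (Suc n) (Suc k) + xi_indep_count n k"
proof -
  let ?m = "Suc (Suc n)"
  let ?Old = "{S. xi_indep (Suc n) S \<and> card S = Suc k}"
  let ?Rest = "{T. xi_indep n T \<and> card T = k}"
  have top_notin: "?m \<notin> T" if "xi_indep n T" for T
    using that by (auto simp: xi_indep_def)
  have "{S. xi_indep ?m S \<and> card S = Suc k} = ?Old \<union> insert ?m ` ?Rest"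
  proof (intro equalityI subsetI)
    fix S assume S: "S \<in> {S. xi_indep ?m S \<and> card S = Suc k}"
    show "S \<in> ?Old \<union> insert ?m ` ?Rest"
    proof (cases "?m \<in> S")
      case True
      then have "S = insert ?m (S - {?m})" by blast
      moreover have "S - {?m} \<in> ?Rest"
        using S True xi_indep_insert_top[OF assms, of "S - {?m}"] xi_indep_finite[of ?m S]
        by (simp add: insert_absorb)
      ultimately show ?thesis by blast
    next
      case False
      then show ?thesis using S xi_indep_Suc_iff[of "Suc n" S] by simp
    qed
  next
    fix S assume "S \<in> ?Old \<union> insert ?m ` ?Rest"
    then show "S \<in> {S. xi_indep ?m S \<and> card S = Suc k}"
      using xi_indep_Suc_iff[of "Suc n" S] xi_indep_insert_top[OF assms] top_notin xi_indep_finite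
      by auto
  qed
  moreover have "?Old \<inter> insert ?m ` ?Rest = {}"
    by (auto simp: xi_indep_def)
  moreover have "inj_on (insert ?m) ?Rest"
    using top_notin by (metis (mono_tags, lifting) inj_onI insert_ident mem_Collect_eq)
  ultimately show ?thesis
    unfolding xi_indep_count_def using finite_xi_indep
    by (simp add: card_Un_disjoint card_image)
qed

unbundle fps_syntax

lemma fps_mult_one_minus_X_nth:
  fixes f :: "'a::comm_ring_1 fps"
  shows "(f * (1 - fps_X)) $ n = f $ n - (if n = 0 then 0 else f $ (n - 1))"
proof -
  have "f * (1 - fps_X) = f - fps_X * f" by (simp add: algebra_simps)
  then show ?thesis by simp
qed

definition xi_indep_gf :: "nat \<Rightarrow> 'a::comm_ring_1 fps" where
  "xi_indep_gf k = Abs_fps (\<lambda>n. of_nat (xi_indep_count n k))"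

lemma xi_indep_gf_one: "xi_indep_gf 1 * (1 - fps_X)^2 = (fps_X :: 'a::comm_ring_1 fps)"
proof -
  have "xi_indep_gf 1 * (1 - fps_X)^2 = (xi_indep_gf 1 * (1 - fps_X)) * (1 - fps_X)"
    by (simp add: power2_eq_square mult.assoc)
  also have "xi_indep_gf 1 * (1 - fps_X) = Abs_fps (\<lambda>n. if n = 0 then 0 else 1 :: 'a)"
    by (rule fps_ext) (simp add: fps_mult_one_minus_X_nth xi_indep_gf_def xi_indep_count_one of_nat_diff)
  also have "Abs_fps (\<lambda>n. if n = 0 then 0 else 1 :: 'a) * (1 - fps_X) = fps_X"
    by (rule fps_ext) (simp add: fps_mult_one_minus_X_nth)
  finally show ?thesis .
qed

lemma xi_indep_gf_Suc:
  assumes "1 \<le> k"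
  shows "xi_indep_gf (Suc k) * (1 - fps_X) =
           fps_X^2 * xi_indep_gf k - (if k = 1 then fps_X^3 else (0 :: 'a::comm_ring_1 fps))"
proof (rule fps_ext)
  fix n
  show "(xi_indep_gf (Suc k) * (1 - fps_X)) $ n =
          (fps_X^2 * xi_indep_gf k - (if k = 1 then fps_X^3 else (0 :: 'a fps))) $ n"
  proof (cases "4 \<le> n")
    case True
    define p where "p = n - 2"
    have "n = Suc (Suc p)" "2 \<le> p" using True by (simp_all add: p_def)
    then show ?thesis
      using xi_indep_count_Suc_Suc[of p k]
      by (simp add: fps_mult_one_minus_X_nth fps_X_power_mult_nth xi_indep_gf_def)
  next
    case False
    have "xi_indep_count n (Suc k) = 0" "xi_indep_count (n - 1) (Suc k) = 0"
      using False assms by (simp_all add: xi_indep_count_eq_0)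
    moreover have "xi_indep_count 0 k = 0" "xi_indep_count 1 k = (if k = 1 then 1 else 0)"
      using assms xi_indep_count_one xi_indep_count_eq_0[of _ k] by (cases "k = 1"; simp)+
    moreover have "n = 0 \<or> n = 1 \<or> n = 2 \<or> n = 3" using False by auto
    ultimately show ?thesis
      by (auto simp: fps_mult_one_minus_X_nth fps_X_power_mult_nth xi_indep_gf_def)
  qed
qed

text \<open>Subtracting X from the series for k = 1 absorbs the correction term of
  xi_indep_gf_Suc, so the recurrence becomes homogeneous.\<close>
lemma xi_indep_gf_times_power:
  assumes "1 \<le> k"
  shows "(xi_indep_gf k - (if k = 1 then fps_X else 0)) * (1 - fps_X)^(k + 1) =
           (fps_X^(2 * k) * (2 - fps_X) :: 'a::comm_ring_1 fps)"
  using assms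
proof (induction k rule: nat_induct_at_least)
  case base
  have "(xi_indep_gf 1 - fps_X) * (1 - fps_X)^2 = fps_X - fps_X * (1 - fps_X)^2"
    using xi_indep_gf_one by (simp add: algebra_simps)
  also have "\<dots> = (fps_X^2 * (2 - fps_X) :: 'a fps)"
    by (simp add: algebra_simps power2_eq_square)
  finally show ?case by (simp add: power2_eq_square)
next
  case (Suc k)
  have "xi_indep_gf (Suc k) * (1 - fps_X)^(Suc k + 1) =
          (xi_indep_gf (Suc k) * (1 - fps_X)) * (1 - fps_X)^(k + 1)"
    by (simp add: mult_ac)
  also have "\<dots> = fps_X^2 * ((xi_indep_gf k - (if k = 1 then fps_X else 0)) * (1 - fps_X)^(k + 1))"
    unfolding xi_indep_gf_Suc[OF Suc.hyps]
    by (cases "k = 1") (simp_all add: algebra_simps power2_eq_square power3_eq_cube)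
  also have "\<dots> = (fps_X^(2 * Suc k) * (2 - fps_X) :: 'a fps)"
    unfolding Suc.IH by (simp add: power2_eq_square mult.assoc)
  finally show ?case using Suc.hyps by simp
qed

theorem mainTheorem20:
  fixes k :: nat
  assumes "k \<ge> 1"
  shows "Abs_fps (\<lambda>n. of_nat (dminus n k) :: rat) =
         fps_X ^ (2 * k) * (2 - fps_X) / (1 - fps_X) ^ (k + 1)
         + (if k = 1 then fps_X else 0)"
proof -
  let ?c = "if k = 1 then fps_X else (0 :: rat fps)"
  have "((1 - fps_X) ^ (k + 1) :: rat fps) $ 0 = 1"
    by (simp add: fps_nth_power_0)
  then have "(1 - fps_X :: rat fps) ^ (k + 1) \<noteq> 0"
    by auto
  then have "fps_X ^ (2 * k) * (2 - fps_X) / (1 - fps_X) ^ (k + 1) = xi_indep_gf k - ?c"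
    using xi_indep_gf_times_power[OF assms] by (metis nonzero_mult_div_cancel_right)
  moreover have "Abs_fps (\<lambda>n. of_nat (dminus n k)) = (xi_indep_gf k :: rat fps)"
    by (simp add: xi_indep_gf_def dminus_eq_xi_indep_count)
  ultimately show ?thesis by simp
qed

end
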